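(* Let $f(z)=z+\sum_{n\ge2}a_nz^n$ belong to $\Omega$, let $k\in\{1,2,3,\dots\}$, and set $b_{k+1}=\frac1k a_2$ and $b_{2k+1}=\frac1k a_3-\frac12\frac{k-1}{k^2}a_2^2$ (these are the coefficients of $z^{k+1}$ and $z^{2k+1}$ in the $k$-th root transform $F_k(z)=(f(z^k))^{1/k}=z+\sum_{n\ge1}b_{kn+1}z^{kn+1}$). Then for every $\mu\in\mathbb{C}$, $$\left|b_{2k+1}-\mu b_{k+1}^2\right|\le \frac{1}{4k}\max\left\{1,\left|\frac{2\mu+k-1}{2k}\right|\right\},$$ and the inequality is sharp.
   Context: $\Delta=\{z\in\mathbb{C}:|z|<1\}$. $\mathcal{A}$ is the class of functions $f$ analytic in $\Delta$ with $f(0)=0$, $f'(0)=1$. $\Omega$ is the class of $f\in\mathcal{A}$ with $|zf'(z)-f(z)|<\tfrac12$ for all $z\in\Delta$. *)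

theory Defs
  imports "HOL-Complex_Analysis.Complex_Analysis"
begin

definition class_A :: "(complex \<Rightarrow> complex) set" where
  "class_A = {f. f holomorphic_on ball 0 1 \<and> f 0 = 0 \<and> deriv f 0 = 1}"

definition class_Omega :: "(complex \<Rightarrow> complex) set" where
  "class_Omega = {f \<in> class_A. \<forall>z\<in>ball 0 1. cmod (z * deriv f z - f z) < 1/2}"

definition taylor_coeff :: "(complex \<Rightarrow> complex) \<Rightarrow> nat \<Rightarrow> complex" where
  "taylor_coeff f n = (deriv ^^ n) f 0 / of_nat (fact n)"

end

theory Submission
  imports Defs
begin

text \<open>For \<open>f \<in> \<Omega>\<close> the function \<open>w = 2 (z f' - f)\<close> maps the disc into itself, vanishes to
  second order at 0 and has Taylor coefficients \<open>2 (n - 1) a\<^sub>n\<close>. Applying the Schwarz lemma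
  twice gives \<open>w = z\<^sup>2 \<phi>\<close> with \<open>|\<phi>| \<le> 1\<close>, and the Schwarz--Pick inequality
  \<open>|\<phi>'(0)| \<le> 1 - |\<phi>(0)|\<^sup>2\<close> becomes \<open>|a\<^sub>3| + |a\<^sub>2|\<^sup>2 \<le> 1/4\<close>. Since
  \<open>b\<^bsub>2k+1\<^esub> - \<mu> b\<^bsub>k+1\<^esub>\<^sup>2 = (a\<^sub>3 - \<nu> a\<^sub>2\<^sup>2) / k\<close> with \<open>\<nu> = (2\<mu> + k - 1) / (2k)\<close>,
  the triangle inequality yields the bound, which \<open>z + z\<^sup>2/2\<close> attains when \<open>|\<nu>| \<ge> 1\<close>
  and \<open>z + z\<^sup>3/4\<close> attains when \<open>|\<nu>| \<le> 1\<close>.\<close>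

lemma higher_deriv_times_ident:
  fixes g :: "complex \<Rightarrow> complex"
  assumes "g holomorphic_on S" "open S" "z \<in> S"
  shows "(deriv ^^ Suc n) (\<lambda>w. w * g w) z
           = z * (deriv ^^ Suc n) g z + of_nat (Suc n) * (deriv ^^ n) g z"
proof -
  have "(deriv ^^ Suc n) (\<lambda>w. w * g w) z
          = (\<Sum>i = 0..Suc n. of_nat (Suc n choose i) * (deriv ^^ i) (\<lambda>w. w) z * (deriv ^^ (Suc n - i)) g z)"
    using assms by (intro higher_deriv_mult) auto
  also have "\<dots> = (\<Sum>i\<in>{0, 1}. of_nat (Suc n choose i) * (deriv ^^ i) (\<lambda>w. w) z * (deriv ^^ (Suc n - i)) g z)"
    by (rule sum.mono_neutral_right) auto
  finally show ?thesis by simp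
qed

lemma Schwarz_Lemma_weak:
  assumes holf: "f holomorphic_on ball 0 1" and f0: "f 0 = 0"
    and bd: "\<And>z. norm z < 1 \<Longrightarrow> norm (f z) \<le> 1" and \<xi>: "norm \<xi> < 1"
  shows "norm (f \<xi>) \<le> norm \<xi>" and "norm (deriv f 0) \<le> 1"
proof -
  txt \<open>The library version needs \<open>|f| < 1\<close>; apply it to \<open>t f\<close> and let \<open>t \<rightarrow> 1\<close>.\<close>
  have scaled: "t * norm (f \<xi>) \<le> norm \<xi> \<and> t * norm (deriv f 0) \<le> 1" if t: "0 < t" "t < 1" for t :: real
  proof -
    let ?g = "\<lambda>z. of_real t * f z"
    have "?g holomorphic_on ball 0 1" by (intro holomorphic_intros holf)
    moreover have "norm (?g z) < 1" if "norm z < 1" for z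
    proof -
      have "norm (?g z) = t * norm (f z)" using t by (simp add: norm_mult)
      also have "\<dots> \<le> t" using bd[OF that] t by (simp add: mult_left_le)
      finally show ?thesis using t by linarith
    qed
    moreover have "deriv ?g 0 = of_real t * deriv f 0"
      using holf by (intro deriv_cmult holomorphic_on_imp_differentiable_at) auto
    ultimately show ?thesis
      using Schwarz_Lemma(1,2)[of ?g \<xi>] f0 \<xi> t by (simp add: norm_mult)
  qed
  show "norm (f \<xi>) \<le> norm \<xi>" "norm (deriv f 0) \<le> 1"
    using scaled by (auto intro: field_le_mult_one_interval)
qed

lemma Schwarz_factor:
  assumes "f holomorphic_on ball 0 1" "f 0 = 0" "\<And>z. norm z < 1 \<Longrightarrow> norm (f z) \<le> 1"
  obtains h where "h holomorphic_on ball 0 1" "\<And>z. norm z < 1 \<Longrightarrow> f z = z * h z"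
    "\<And>z. norm z < 1 \<Longrightarrow> norm (h z) \<le> 1" "h 0 = deriv f 0"
proof -
  obtain h where h: "h holomorphic_on ball 0 1" "\<And>z. norm z < 1 \<Longrightarrow> f z = z * h z" "deriv f 0 = h 0"
    using Schwarz3[OF assms(1)] assms(2) by blast
  have "norm (h z) \<le> 1" if z: "norm z < 1" for z
  proof (cases "z = 0")
    case True
    then show ?thesis using Schwarz_Lemma_weak(2)[OF assms, of 0] h(3) by simp
  next
    case False
    then show ?thesis
      using Schwarz_Lemma_weak(1)[OF assms z] h(2)[OF z] by (simp add: norm_mult)
  qed
  with h that show ?thesis by auto
qed

lemma Schwarz_Pick_deriv_0_strict:
  assumes holg: "g holomorphic_on ball 0 1" and bd: "\<And>z. norm z < 1 \<Longrightarrow> norm (g z) < 1"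
  shows "norm (deriv g 0) \<le> 1 - norm (g 0)^2"
proof -
  define a where "a = g 0"
  have a: "norm a < 1" using bd[of 0] by (simp add: a_def)
  have den: "1 - cnj a * a = of_real (1 - norm a ^ 2)"
    using complex_norm_square[of a] by (simp add: mult.commute)
  have pos: "0 < 1 - norm a ^ 2" using a by (simp add: power_less_one_iff)
  have den_nz: "1 - cnj a * a \<noteq> 0" unfolding den using pos by (simp only: of_real_eq_0_iff)
  define \<psi> where "\<psi> = Moebius_function 0 a \<circ> g"
  have "\<psi> holomorphic_on ball 0 1"
    unfolding \<psi>_def using bd
    by (intro holomorphic_on_compose_gen[OF holg Moebius_function_holomorphic[OF a]]) auto
  moreover have "\<psi> 0 = 0" by (simp add: \<psi>_def a_def Moebius_function_eq_zero)
  moreover have "norm (\<psi> z) < 1" if "norm z < 1" for z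
    using Moebius_function_norm_lt_1[OF a bd[OF that]] by (simp add: \<psi>_def)
  ultimately have "norm (deriv \<psi> 0) \<le> 1" by (rule Schwarz_Lemma(2)[of _ 0]) auto
  moreover have "(\<psi> has_field_derivative deriv g 0 / (1 - cnj a * a)) (at 0)"
  proof -
    have "(g has_field_derivative deriv g 0) (at 0)"
      by (rule holomorphic_derivI[OF holg]) auto
    then show ?thesis
      unfolding \<psi>_def comp_def Moebius_function_simple
      using den_nz by (auto intro!: derivative_eq_intros simp: a_def[symmetric] power2_eq_square)
  qed
  ultimately have "norm (deriv g 0) / (1 - norm a ^ 2) \<le> 1"
    using pos by (simp only: DERIV_imp_deriv den norm_divide norm_of_real abs_of_pos)
  with pos show ?thesis by (simp add: a_def divide_le_eq)
qed

lemma Schwarz_Pick_deriv_0: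
  assumes holg: "g holomorphic_on ball 0 1" and bd: "\<And>z. norm z < 1 \<Longrightarrow> norm (g z) \<le> 1"
  shows "norm (deriv g 0) \<le> 1 - norm (g 0)^2"
proof (cases "\<exists>\<xi>. norm \<xi> < 1 \<and> norm (g \<xi>) = 1")
  case True
  then obtain \<xi> where \<xi>: "norm \<xi> < 1" "norm (g \<xi>) = 1" by blast
  have "g constant_on ball 0 1"
    by (rule maximum_modulus_principle[OF holg, of "ball 0 1" \<xi>]) (use \<xi> bd in auto)
  then obtain c where c: "\<And>z. z \<in> ball 0 1 \<Longrightarrow> g z = c" by (auto simp: constant_on_def)
  have "((\<lambda>_. c) has_field_derivative 0) (at 0)" by simp
  then have "(g has_field_derivative 0) (at 0)"
    by (rule has_field_derivative_transform_within_open[of _ _ _ "ball 0 1"]) (auto simp: c)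
  moreover have "norm (g 0) = 1" using c \<xi> by auto
  ultimately show ?thesis by (simp add: DERIV_imp_deriv)
next
  case False
  with bd have "norm (g z) < 1" if "norm z < 1" for z
    using that by (meson order.not_eq_order_implies_strict)
  then show ?thesis by (rule Schwarz_Pick_deriv_0_strict[OF holg])
qed

lemma self_map_taylor_coeff_bound:
  assumes holw: "w holomorphic_on ball 0 1" and w0: "w 0 = 0" and w1: "deriv w 0 = 0"
    and bd: "\<And>z. norm z < 1 \<Longrightarrow> norm (w z) \<le> 1"
  shows "norm (taylor_coeff w 3) + norm (taylor_coeff w 2)^2 \<le> 1"
proof -
  obtain h where holh: "h holomorphic_on ball 0 1" and wh: "\<And>z. norm z < 1 \<Longrightarrow> w z = z * h z"
    and hbd: "\<And>z. norm z < 1 \<Longrightarrow> norm (h z) \<le> 1" and h0: "h 0 = 0"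
    using Schwarz_factor[OF holw w0 bd] w1 by metis
  obtain \<phi> where hol\<phi>: "\<phi> holomorphic_on ball 0 1" and h\<phi>: "\<And>z. norm z < 1 \<Longrightarrow> h z = z * \<phi> z"
    and \<phi>bd: "\<And>z. norm z < 1 \<Longrightarrow> norm (\<phi> z) \<le> 1"
    using Schwarz_factor[OF holh h0 hbd] by metis
  have dw: "(deriv ^^ Suc n) w 0 = of_nat (Suc n) * (deriv ^^ n) h 0" for n
  proof -
    have "(deriv ^^ Suc n) w 0 = (deriv ^^ Suc n) (\<lambda>z. z * h z) 0"
      using holw holh by (intro higher_deriv_transform_within_open[of _ "ball 0 1"])
        (auto intro!: holomorphic_intros simp: wh)
    then show ?thesis using higher_deriv_times_ident[OF holh, of 0 n] by simp
  qed
  have dh: "(deriv ^^ Suc n) h 0 = of_nat (Suc n) * (deriv ^^ n) \<phi> 0" for n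
  proof -
    have "(deriv ^^ Suc n) h 0 = (deriv ^^ Suc n) (\<lambda>z. z * \<phi> z) 0"
      using holh hol\<phi> by (intro higher_deriv_transform_within_open[of _ "ball 0 1"])
        (auto intro!: holomorphic_intros simp: h\<phi>)
    then show ?thesis using higher_deriv_times_ident[OF hol\<phi>, of 0 n] by simp
  qed
  have "(deriv ^^ 2) w 0 = 2 * \<phi> 0" "(deriv ^^ 3) w 0 = 6 * deriv \<phi> 0"
    using dw[of 1] dw[of 2] dh[of 0] dh[of 1] by (simp_all add: eval_nat_numeral)
  then have "taylor_coeff w 2 = \<phi> 0" "taylor_coeff w 3 = deriv \<phi> 0"
    by (simp_all add: taylor_coeff_def fact_numeral)
  then show ?thesis using Schwarz_Pick_deriv_0[OF hol\<phi> \<phi>bd] by simp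
qed

lemma class_Omega_taylor_coeff_bound:
  assumes "f \<in> class_Omega"
  shows "norm (taylor_coeff f 3) + norm (taylor_coeff f 2)^2 \<le> 1/4"
proof -
  have holf: "f holomorphic_on ball 0 1" and f0: "f 0 = 0"
    and bd: "\<And>z. z \<in> ball 0 1 \<Longrightarrow> norm (z * deriv f z - f z) < 1/2"
    using assms by (auto simp: class_Omega_def class_A_def)
  have holdf: "deriv f holomorphic_on ball 0 1" using holf by (rule holomorphic_deriv) simp
  define w where "w z = 2 * (z * deriv f z - f z)" for z
  have holw: "w holomorphic_on ball 0 1"
    unfolding w_def by (intro holomorphic_intros holf holdf)
  have dw: "(deriv ^^ Suc n) w 0 = 2 * of_nat n * (deriv ^^ Suc n) f 0" for n
  proof -
    have "(deriv ^^ Suc n) w 0 = 2 * (deriv ^^ Suc n) (\<lambda>z. z * deriv f z - f z) 0"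
      unfolding w_def by (rule higher_deriv_cmult[of _ "ball 0 1"])
        (auto intro!: holomorphic_intros holf holdf)
    also have "(deriv ^^ Suc n) (\<lambda>z. z * deriv f z - f z) 0
                 = (deriv ^^ Suc n) (\<lambda>z. z * deriv f z) 0 - (deriv ^^ Suc n) f 0"
      by (rule higher_deriv_diff[of _ "ball 0 1"]) (auto intro!: holomorphic_intros holf holdf)
    also have "(deriv ^^ Suc n) (\<lambda>z. z * deriv f z) 0 = of_nat (Suc n) * (deriv ^^ Suc n) f 0"
      using higher_deriv_times_ident[OF holdf, of 0 n] by (simp add: funpow_Suc_right del: funpow.simps)
    finally show ?thesis by (simp add: algebra_simps)
  qed
  have "norm (taylor_coeff w 3) + norm (taylor_coeff w 2)^2 \<le> 1"
  proof (rule self_map_taylor_coeff_bound[OF holw])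
    show "w 0 = 0" by (simp add: w_def f0)
    show "deriv w 0 = 0" using dw[of 0] by simp
    show "norm (w z) \<le> 1" if "norm z < 1" for z
      using bd[of z] that unfolding w_def norm_mult by simp
  qed
  moreover have "taylor_coeff w 2 = 2 * taylor_coeff f 2" "taylor_coeff w 3 = 4 * taylor_coeff f 3"
    using dw[of 1] dw[of 2] by (simp_all add: taylor_coeff_def fact_numeral eval_nat_numeral)
  ultimately show ?thesis by (simp add: norm_mult power_mult_distrib)
qed

lemma norm_sub_mult_square_le:
  fixes a b \<nu> :: complex
  assumes "norm b + norm a ^ 2 \<le> 1/4"
  shows "norm (b - \<nu> * a^2) \<le> max 1 (norm \<nu>) / 4"
proof -
  have "norm (b - \<nu> * a^2) \<le> norm b + norm \<nu> * norm a ^ 2"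
    by (metis norm_triangle_ineq4 norm_mult norm_power)
  also have "\<dots> \<le> max 1 (norm \<nu>) * (norm b + norm a ^ 2)"
    unfolding distrib_left by (intro add_mono mult_right_mono) (auto simp: mult_le_cancel_right1)
  also have "\<dots> \<le> max 1 (norm \<nu>) / 4"
    using mult_left_mono[OF assms, of "max 1 (norm \<nu>)"] by simp
  finally show ?thesis .
qed

lemma root_transform_coeff_functional:
  fixes a2 a3 \<mu> :: complex and k :: nat
  assumes "k \<ge> 1"
  shows "a3 / of_nat k - (1/2) * (of_nat k - 1) / (of_nat k)^2 * a2^2 - \<mu> * (a2 / of_nat k)^2
     = (a3 - ((2 * \<mu> + of_nat k - 1) / (2 * of_nat k)) * a2^2) / of_nat k"
  using assms by (simp add: field_simps power2_eq_square)

lemma higher_deriv_power_at_0: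
  "(deriv ^^ n) (\<lambda>z. z ^ m) (0 :: complex) = (if n = m then fact m else 0)"
proof -
  have "(deriv ^^ n) (\<lambda>z. z ^ m) (0 :: complex) = pochhammer (of_nat (Suc m - n)) n * 0 ^ (m - n)"
    using higher_deriv_power[of n 0 m 0] by simp
  then show ?thesis
    by (cases "n < m") (auto simp: pochhammer_fact pochhammer_0_left)
qed

lemma taylor_coeff_ident_plus_monomial:
  "taylor_coeff (\<lambda>z. z + c * z ^ m) n = (if n = 1 then 1 else 0) + (if n = m then c else 0)"
proof -
  have "(deriv ^^ n) (\<lambda>z. z + c * z ^ m) 0 = (deriv ^^ n) (\<lambda>z. z) 0 + (deriv ^^ n) (\<lambda>z. c * z ^ m) 0"
    by (rule higher_deriv_add[of _ UNIV]) (auto intro!: holomorphic_intros)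
  also have "(deriv ^^ n) (\<lambda>z. c * z ^ m) 0 = c * (deriv ^^ n) (\<lambda>z. z ^ m) 0"
    by (rule higher_deriv_cmult[of _ UNIV]) (auto intro!: holomorphic_intros)
  finally show ?thesis by (auto simp: taylor_coeff_def higher_deriv_power_at_0)
qed

lemma ident_plus_monomial_in_class_Omega:
  assumes m: "m \<ge> 2" and c: "real (m - 1) * norm c \<le> 1/2"
  shows "(\<lambda>z. z + c * z ^ m) \<in> class_Omega"
proof -
  have d: "deriv (\<lambda>z. z + c * z ^ m) z = 1 + c * of_nat m * z ^ (m - 1)" for z
    by (rule DERIV_imp_deriv) (auto intro!: derivative_eq_intros)
  have "norm (z * deriv (\<lambda>z. z + c * z ^ m) z - (z + c * z ^ m)) < 1/2" if z: "norm z < 1" for z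
  proof -
    have "z * z ^ (m - 1) = z ^ m" using m by (simp add: power_eq_if[of z m])
    with m have "z * deriv (\<lambda>z. z + c * z ^ m) z - (z + c * z ^ m) = of_nat (m - 1) * c * z ^ m"
      by (simp add: d algebra_simps of_nat_diff)
    then have "norm (z * deriv (\<lambda>z. z + c * z ^ m) z - (z + c * z ^ m))
                 = real (m - 1) * norm c * norm z ^ m"
      by (simp add: norm_mult norm_power)
    also have "\<dots> \<le> 1/2 * norm z ^ m" using c by (intro mult_right_mono) auto
    also have "\<dots> < 1/2" using z m by (simp add: power_less_one_iff)
    finally show ?thesis .
  qed
  moreover have "(\<lambda>z. z + c * z ^ m) holomorphic_on ball 0 1" by (intro holomorphic_intros)
  ultimately show ?thesis using m by (simp add: class_Omega_def class_A_def d)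
qed

theorem theorem6p1:
  fixes k :: nat and \<mu> :: complex
  assumes "k \<ge> 1"
  shows "(\<forall>f\<in>class_Omega.
           let a2 = taylor_coeff f 2; a3 = taylor_coeff f 3;
               b1 = a2 / of_nat k;
               b2 = a3 / of_nat k - (1/2) * (of_nat k - 1) / (of_nat k)^2 * a2^2
           in cmod (b2 - \<mu> * b1^2)
                \<le> 1 / (4 * real k) * max 1 (cmod ((2 * \<mu> + of_nat k - 1) / (2 * of_nat k))))
       \<and> (\<exists>f\<in>class_Omega.
           let a2 = taylor_coeff f 2; a3 = taylor_coeff f 3;
               b1 = a2 / of_nat k;
               b2 = a3 / of_nat k - (1/2) * (of_nat k - 1) / (of_nat k)^2 * a2^2
           in cmod (b2 - \<mu> * b1^2)
                = 1 / (4 * real k) * max 1 (cmod ((2 * \<mu> + of_nat k - 1) / (2 * of_nat k))))"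
proof -
  define \<nu> where "\<nu> = (2 * \<mu> + of_nat k - 1) / (2 * of_nat k)"
  define J where "J f = cmod (taylor_coeff f 3 - \<nu> * taylor_coeff f 2 ^ 2)" for f
  have bound: "J f \<le> max 1 (cmod \<nu>) / 4" if "f \<in> class_Omega" for f
    unfolding J_def by (intro norm_sub_mult_square_le class_Omega_taylor_coeff_bound that)
  obtain f where f: "f \<in> class_Omega" "J f = max 1 (cmod \<nu>) / 4"
  proof (cases "cmod \<nu> \<ge> 1")
    case True
    then show ?thesis
      using that[OF ident_plus_monomial_in_class_Omega[of 2 "1/2"]]
        taylor_coeff_ident_plus_monomial[of "1/2" 2]
      by (simp add: J_def norm_mult norm_power max_def power2_eq_square)
  next
    case False
    then show ?thesis
      using that[OF ident_plus_monomial_in_class_Omega[of 3 "1/4"]]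
        taylor_coeff_ident_plus_monomial[of "1/4" 3]
      by (simp add: J_def max_def)
  qed
  have scale: "1 / (4 * real k) * max 1 (cmod \<nu>) = max 1 (cmod \<nu>) / 4 / real k" by simp
  show ?thesis
    unfolding Let_def \<nu>_def[symmetric] root_transform_coeff_functional[OF assms, folded \<nu>_def]
      norm_divide norm_of_nat J_def[symmetric] scale
    by (intro conjI ballI bexI[OF _ f(1)] divide_right_mono bound) (simp_all add: f(2))
qed

end
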